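(* Let $\eta$ be the probability measure $\mathbf{1}_{x\ge0}e^{-x}dx$ on $\mathbb{R}$ and $\eta^n$ its $n$-fold product. For every countable subset $V\subset\mathbb{R}^n$, $$\log\int\exp\Big(\sup_{\xi\in V}\{\langle\xi,x\rangle-\Lambda_{\eta^n}(\xi)\}\Big)\,d\eta^n(x)\le\int\sup_{\xi\in V}\langle\Lambda_\eta(\xi),x-u\rangle\,d\eta^n(x),$$ where $u=(1,\dots,1)$ and $\Lambda_\eta(\xi)=(\Lambda_\eta(\xi_1),\dots,\Lambda_\eta(\xi_n))$.
   Context: For a probability measure $\mu$, $\Lambda_\mu(\xi)=\log\int e^{\langle\xi,x\rangle}d\mu(x)$ is its logarithmic Laplace transform; thus $\Lambda_\eta(t)=-\log(1-t)$ for $t<1$ and $+\infty$ otherwise, and $\Lambda_{\eta^n}(\xi)=\sum_i\Lambda_\eta(\xi_i)$. *)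

theory Defs
  imports "HOL-Probability.Probability"
begin

definition eta :: "real measure" where
  "eta = density lborel (\<lambda>x. ennreal (indicator {0..} x * exp (- x)))"

definition eta_n :: "('n::finite \<Rightarrow> real) measure" where
  "eta_n = PiM UNIV (\<lambda>_. eta)"

definition Lambda_eta :: "real \<Rightarrow> ereal" where
  "Lambda_eta t = (if t < 1 then ereal (- ln (1 - t)) else \<infinity>)"

definition Lambda_eta_n :: "('n::finite \<Rightarrow> real) \<Rightarrow> ereal" where
  "Lambda_eta_n \<xi> = (\<Sum>i\<in>UNIV. Lambda_eta (\<xi> i))"

definition inner_fun :: "('n::finite \<Rightarrow> real) \<Rightarrow> ('n \<Rightarrow> real) \<Rightarrow> real" where
  "inner_fun \<xi> x = (\<Sum>i\<in>UNIV. \<xi> i * x i)"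

definition inner_Lambda :: "('n::finite \<Rightarrow> real) \<Rightarrow> ('n \<Rightarrow> real) \<Rightarrow> ereal" where
  "inner_Lambda \<xi> x = (\<Sum>i\<in>UNIV. Lambda_eta (\<xi> i) * ereal (x i - 1))"

definition ereal_exp :: "ereal \<Rightarrow> ennreal" where
  "ereal_exp y = (if y = -\<infinity> then 0 else if y = \<infinity> then \<infinity> else ennreal (exp (real_of_ereal y)))"

definition ennreal_ln :: "ennreal \<Rightarrow> ereal" where
  "ennreal_ln y = (if y = 0 then -\<infinity> else if y = \<infinity> then \<infinity> else ereal (ln (enn2real y)))"

definition ereal_integral :: "'a measure \<Rightarrow> ('a \<Rightarrow> ereal) \<Rightarrow> ereal" where
  "ereal_integral M f =
     enn2ereal (\<integral>\<^sup>+ x. e2ennreal (f x) \<partial>M) - enn2ereal (\<integral>\<^sup>+ x. e2ennreal (- f x) \<partial>M)"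

end

theory Submission
  imports Defs "HOL-Real_Asymp.Real_Asymp"
begin

text \<open>
  Put \<open>\<Lambda> = Lambda_eta\<close> and \<open>c(x, y) = y ln (y / x) - y + x\<close>. For finitely many \<open>t\<^sub>j < 1\<close> the functions
  \<open>F x = max\<^sub>j (t\<^sub>j x - \<Lambda>(t\<^sub>j) + b\<^sub>j)\<close> and \<open>G y = max\<^sub>j (\<Lambda>(t\<^sub>j) (y - 1) + b\<^sub>j)\<close> satisfy
  \<open>F x \<le> G y + c(x, y)\<close>, because \<open>c((1 - t) x, y) \<ge> 0\<close>. Transporting the tilted measure
  \<open>e\<^sup>F \<eta> / Z\<close> monotonically onto \<open>\<eta>\<close> then gives \<open>log \<integral> e\<^sup>F d\<eta> \<le> \<integral> G d\<eta>\<close>; instead of a change of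
  variables along the transport map we show that an explicit potential is nondecreasing.
  The one-dimensional inequality tensorises by Jensen's inequality in one coordinate and Tonelli,
  and a countable \<open>V\<close> is exhausted by finite subsets using monotone convergence; the vectors
  \<open>\<xi>\<close> with some \<open>\<xi>\<^sub>i \<ge> 1\<close> contribute \<open>-\<infinity>\<close> on the left and can be dropped.
\<close>

definition entropy_cost :: "real \<Rightarrow> real \<Rightarrow> real" where
  "entropy_cost x y = y * ln (y / x) - y + x"

lemma entropy_cost_nonneg:
  assumes "0 < x" "0 < y"
  shows "0 \<le> entropy_cost x y"
proof -
  have "ln (x / y) \<le> x / y - 1" using assms by (intro ln_le_minus_one) auto
  then have "y * ln (x / y) \<le> y * (x / y - 1)" using assms by (intro mult_left_mono) auto
  then show ?thesis using assms by (simp add: entropy_cost_def ln_div algebra_simps)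
qed

lemma eta_eq_exponential_density: "eta = density lborel (exponential_density 1)"
  unfolding eta_def by (intro density_cong) (auto simp: exponential_density_def indicator_def)

lemma prob_space_eta: "prob_space eta"
  unfolding eta_eq_exponential_density by (rule prob_space_exponential_density) simp

lemma sets_eta [simp, measurable_cong]: "sets eta = sets borel"
  unfolding eta_def by simp

lemma integrable_eta_ident: "integrable eta (\<lambda>x. x)"
proof -
  interpret prob_space eta by (rule prob_space_eta)
  have "distributed eta lborel (\<lambda>x. x) (exponential_density 1)"
    unfolding distributed_def by (simp add: eta_eq_exponential_density distr_id2 del: erlang_density_def)
  from erlang_ith_moment_integrable[OF _ this, of 1] show ?thesis by simp
qed

section \<open>A transport inequality on the half-line\<close>

lemma DERIV_nonneg_imp_tendsto_at_right_le:
  fixes f :: "real \<Rightarrow> real"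
  assumes deriv: "\<And>x. a < x \<Longrightarrow> \<exists>D. (f has_real_derivative D) (at x) \<and> 0 \<le> D"
    and lim: "(f \<longlongrightarrow> l) (at_right a)" and "a < X"
  shows "l \<le> f X"
proof (rule tendsto_le[OF trivial_limit_at_right_real tendsto_const lim])
  have "f e \<le> f X" if "a < e" "e \<le> X" for e
  proof (rule DERIV_nonneg_imp_increasing_open[OF that(2)])
    show "\<exists>D. (f has_real_derivative D) (at x) \<and> 0 \<le> D" if "e < x" "x < X" for x
      using deriv that \<open>a < e\<close> by auto
    show "continuous_on {e..X} f"
    proof (intro continuous_at_imp_continuous_on ballI)
      fix x assume "x \<in> {e..X}"
      then have "a < x" using \<open>a < e\<close> by simp
      then obtain D where "(f has_real_derivative D) (at x)" using deriv by blast
      then show "isCont f x" by (rule DERIV_isCont)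
    qed
  qed
  then show "\<forall>\<^sub>F x in at_right a. f x \<le> f X"
    unfolding eventually_at_right_field using \<open>a < X\<close> by (intro exI[of _ X]) auto
qed

text \<open>The constants \<open>\<delta>, C, A, B\<close> enter only through the growth bounds on \<open>F\<close>, which make
  \<open>\<integral> e\<^sup>F d\<eta>\<close> finite and positive and let \<open>tail\<close> below decay exponentially.\<close>

locale eta_transport =
  fixes F G :: "real \<Rightarrow> real" and \<delta> C A B :: real
  assumes continuous_F: "continuous_on UNIV F"
    and continuous_G: "continuous_on UNIV G"
    and F_le_G_cost: "\<And>x y. 0 < x \<Longrightarrow> 0 < y \<Longrightarrow> F x \<le> G y + entropy_cost x y"
    and integrable_G: "integrable eta G"
    and \<delta>_pos: "0 < \<delta>" and F_upper: "\<And>t. 0 \<le> t \<Longrightarrow> F t \<le> C + (1 - \<delta>) * t"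
    and B_nonneg: "0 \<le> B" and F_lower: "\<And>t. 0 \<le> t \<Longrightarrow> A - B * t \<le> F t"
begin

definition tilt :: "real \<Rightarrow> real" where
  "tilt t = exp (F t - t)"

lemma tilt_pos: "0 < tilt t"
  by (simp add: tilt_def)

lemma continuous_on_tilt: "continuous_on S tilt"
  unfolding tilt_def by (intro continuous_intros continuous_on_subset[OF continuous_F]) auto

lemma tilt_le: "0 \<le> t \<Longrightarrow> tilt t \<le> exp C * exp (- \<delta> * t)"
  using F_upper[of t] by (simp add: tilt_def exp_add[symmetric] algebra_simps)

lemma tilt_ge: "0 \<le> t \<Longrightarrow> exp A * exp (- (1 + B) * t) \<le> tilt t"
  using F_lower[of t] by (simp add: tilt_def exp_add[symmetric] algebra_simps)

lemma
  assumes "0 \<le> a"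
  shows tilt_integrable_on: "tilt integrable_on {a..}"
    and integral_tilt_le: "integral {a..} tilt \<le> exp C * exp (- \<delta> * a) / \<delta>"
    and integral_tilt_ge: "exp A * exp (- (1 + B) * a) / (1 + B) \<le> integral {a..} tilt"
proof -
  have upper: "((\<lambda>t. exp C * exp (- \<delta> * t)) has_integral exp C * (exp (- \<delta> * a) / \<delta>)) {a..}"
    by (intro has_integral_mult_right has_integral_exp_minus_to_infinity \<delta>_pos)
  have lower: "((\<lambda>t. exp A * exp (- (1 + B) * t)) has_integral exp A * (exp (- (1 + B) * a) / (1 + B))) {a..}"
    using B_nonneg by (intro has_integral_mult_right has_integral_exp_minus_to_infinity) auto
  have "tilt \<in> borel_measurable (lebesgue_on {a..})"
    by (intro continuous_imp_measurable_on_sets_lebesgue continuous_on_tilt) auto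
  moreover have "norm (tilt t) \<le> exp C * exp (- \<delta> * t)" if "t \<in> {a..}" for t
    using tilt_le[of t] tilt_pos[of t] that assms by simp
  ultimately have "tilt absolutely_integrable_on {a..}"
    using upper by (intro measurable_bounded_by_integrable_imp_absolutely_integrable) auto
  then show integrable: "tilt integrable_on {a..}"
    using set_lebesgue_integral_eq_integral(1) by blast
  show "integral {a..} tilt \<le> exp C * exp (- \<delta> * a) / \<delta>"
    using integral_le[OF integrable has_integral_integrable[OF upper]] integral_unique[OF upper] tilt_le assms
    by simp
  show "exp A * exp (- (1 + B) * a) / (1 + B) \<le> integral {a..} tilt"
    using integral_le[OF has_integral_integrable[OF lower] integrable] integral_unique[OF lower] tilt_ge assms
    by simp
qed

lemma integral_tilt_pos: "0 \<le> a \<Longrightarrow> 0 < integral {a..} tilt"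
  by (rule less_le_trans[OF _ integral_tilt_ge]) (use B_nonneg in auto)

definition mass :: real where
  "mass = integral {0..} tilt"

lemma mass_pos: "0 < mass"
  unfolding mass_def by (rule integral_tilt_pos) simp

text \<open>The probability measure with density \<open>tilt / mass\<close> on \<open>[0, \<infinity>)\<close> has tail function \<open>tail\<close>;
  since \<open>eta [L, \<infinity>) = exp (- L)\<close>, the map \<open>transport\<close> pushes it forward to \<open>eta\<close>.\<close>

definition tail :: "real \<Rightarrow> real" where
  "tail x = 1 - integral {0..x} tilt / mass"

definition transport :: "real \<Rightarrow> real" where
  "transport x = - ln (tail x)"

lemma tail_0: "tail 0 = 1"
  by (simp add: tail_def)

lemma tail_eq: "0 \<le> x \<Longrightarrow> tail x = integral {x..} tilt / mass"
proof -
  assume x: "0 \<le> x"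
  have "(tilt has_integral integral {0..x} tilt) {0..x}"
    by (intro integrable_integral integrable_continuous_interval continuous_on_tilt)
  moreover have "(tilt has_integral integral {x..} tilt) {x..}"
    using x by (intro integrable_integral tilt_integrable_on)
  ultimately have "(tilt has_integral (integral {0..x} tilt + integral {x..} tilt)) ({0..x} \<union> {x..})"
    by (rule has_integral_Un) (auto intro: negligible_subset[of "{x}"])
  moreover have "{0..x} \<union> {x..} = {0..}" using x by auto
  ultimately have "integral {0..x} tilt + integral {x..} tilt = mass"
    unfolding mass_def by (simp add: integral_unique)
  then show ?thesis using mass_pos by (simp add: tail_def field_simps)
qed

lemma tail_pos: "0 \<le> x \<Longrightarrow> 0 < tail x"
  using tail_eq integral_tilt_pos mass_pos by simp

lemma tail_less_1:
  assumes "0 < x"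
  shows "tail x < 1"
proof -
  have "integral {0..x} (\<lambda>_. exp A * exp (- (1 + B) * x)) \<le> integral {0..x} tilt"
  proof (intro integral_le integrable_continuous_interval continuous_on_tilt continuous_intros)
    fix t assume t: "t \<in> {0..x}"
    then have "exp A * exp (- (1 + B) * x) \<le> exp A * exp (- (1 + B) * t)"
      using B_nonneg by (auto intro: mult_left_mono)
    also have "\<dots> \<le> tilt t" using t by (intro tilt_ge) simp
    finally show "exp A * exp (- (1 + B) * x) \<le> tilt t" .
  qed
  moreover have "integral {0..x} (\<lambda>_. exp A * exp (- (1 + B) * x)) = x * (exp A * exp (- (1 + B) * x))"
    using assms by simp
  ultimately have "0 < integral {0..x} tilt" using assms by (smt (verit) exp_gt_zero mult_pos_pos)
  then show ?thesis using mass_pos by (simp add: tail_def)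
qed

lemma tail_le: "0 \<le> x \<Longrightarrow> tail x \<le> exp C * exp (- \<delta> * x) / \<delta> / mass"
  using divide_right_mono[OF integral_tilt_le[of x], of mass] mass_pos by (simp add: tail_eq)

lemma transport_0: "transport 0 = 0"
  by (simp add: transport_def tail_0)

lemma transport_pos: "0 < x \<Longrightarrow> 0 < transport x"
  using tail_pos[of x] tail_less_1[of x] by (simp add: transport_def)

lemma exp_minus_transport: "0 \<le> x \<Longrightarrow> exp (- transport x) = tail x"
  using tail_pos by (simp add: transport_def)

lemma tail_has_real_derivative_within:
  "0 \<le> x \<Longrightarrow> (tail has_real_derivative - (tilt x / mass)) (at x within {0..x + 1})"
  unfolding tail_def using mass_pos
  by (auto intro!: derivative_eq_intros integral_has_real_derivative continuous_on_tilt)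

lemma tail_has_real_derivative: "0 < x \<Longrightarrow> (tail has_real_derivative - (tilt x / mass)) (at x)"
  using tail_has_real_derivative_within[of x] at_within_Icc_at[of 0 x "x + 1"] by simp

lemma tail_has_real_derivative_at_right_0: "(tail has_real_derivative - (tilt 0 / mass)) (at_right 0)"
  using tail_has_real_derivative_within[of 0] by (simp add: at_within_Icc_at_right)

lemma transport_has_real_derivative:
  assumes "0 \<le> x" "(tail has_real_derivative - (tilt x / mass)) (at x within S)"
  shows "(transport has_real_derivative tilt x / mass / tail x) (at x within S)"
  unfolding transport_def using tail_pos[OF assms(1)]
  by (auto intro!: derivative_eq_intros assms(2))

definition G_integral :: "real \<Rightarrow> real" where
  "G_integral u = integral {0..u} (\<lambda>y. G y * exp (- y))"

lemma continuous_on_G_integrand: "continuous_on S (\<lambda>y. G y * exp (- y))"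
  by (intro continuous_intros continuous_on_subset[OF continuous_G]) auto

lemma continuous_on_G_integral: "continuous_on {0..b} G_integral"
  unfolding G_integral_def
  by (intro indefinite_integral_continuous_1 integrable_continuous_interval continuous_on_G_integrand)

lemma G_integral_has_real_derivative:
  assumes "0 < u"
  shows "(G_integral has_real_derivative G u * exp (- u)) (at u)"
proof -
  have "(G_integral has_real_derivative G u * exp (- u)) (at u within {0..u + 1})"
    unfolding G_integral_def using assms
    by (intro integral_has_real_derivative continuous_on_G_integrand) auto
  then show ?thesis using assms at_within_Icc_at[of 0 u "u + 1"] by simp
qed

text \<open>The potential vanishes at \<open>0+\<close> and its derivative is nonnegative by \<open>F_le_G_cost\<close>;
  letting \<open>x \<rightarrow> \<infinity>\<close> in \<open>potential x \<ge> 0\<close> gives \<open>ln mass \<le> \<integral> G d\<eta>\<close>.\<close>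

definition potential :: "real \<Rightarrow> real" where
  "potential x = G_integral (transport x) - (1 - tail x) * ln mass
     - tail x * transport x * ln (transport x / x)"

lemma potential_has_real_derivative:
  assumes x: "0 < x"
  shows "(potential has_real_derivative
      tilt x / mass * (G (transport x) - ln mass - (1 - transport x) * ln (transport x / x) - 1)
      + tail x * transport x / x) (at x)"
proof -
  define \<mu> where "\<mu> = tilt x / mass"
  define \<tau> where "\<tau> = tail x"
  define L where "L = transport x"
  define L' where "L' = \<mu> / \<tau>"
  have \<tau>: "0 < \<tau>" using tail_pos x by (simp add: \<tau>_def)
  have L: "0 < L" using transport_pos x by (simp add: L_def)
  have d_tail: "(tail has_real_derivative - \<mu>) (at x)"
    unfolding \<mu>_def by (rule tail_has_real_derivative[OF x])
  have d_transport: "(transport has_real_derivative L') (at x)"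
    unfolding L'_def \<mu>_def \<tau>_def using x
    by (intro transport_has_real_derivative tail_has_real_derivative) auto
  have d_ratio: "((\<lambda>x. ln (transport x / x)) has_real_derivative L' / L - 1 / x) (at x)"
    using d_transport L x unfolding L_def
    by (auto intro!: derivative_eq_intros simp: field_simps power2_eq_square)
  have d_G: "((\<lambda>x. G_integral (transport x)) has_real_derivative G L * exp (- L) * L') (at x)"
    unfolding L_def by (rule DERIV_chain2[OF G_integral_has_real_derivative[OF transport_pos[OF x]] d_transport])
  have deriv: "(potential has_real_derivative G L * exp (- L) * L' - \<mu> * ln mass
      - ((- \<mu> * L + \<tau> * L') * ln (L / x) + \<tau> * L * (L' / L - 1 / x))) (at x)"
    unfolding potential_def[abs_def]
    by (intro DERIV_diff d_G
        DERIV_cong[OF DERIV_mult[OF DERIV_mult[OF d_tail d_transport] d_ratio]]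
        DERIV_cong[OF DERIV_cmult_right[OF DERIV_diff[OF DERIV_const d_tail]]])
      (use L in \<open>simp_all add: L_def \<tau>_def algebra_simps\<close>)
  have exp_L: "exp (- L) = \<tau>" unfolding L_def \<tau>_def using x by (simp add: exp_minus_transport)
  show ?thesis
    unfolding \<mu>_def [symmetric] \<tau>_def [symmetric] L_def [symmetric]
    by (rule DERIV_cong[OF deriv]) (use exp_L \<tau> L x in \<open>simp add: L'_def field_simps\<close>)
qed

lemma potential_derivative_eq:
  assumes x: "0 < x"
  shows "tilt x / mass * (G (transport x) - ln mass - (1 - transport x) * ln (transport x / x) - 1)
      + tail x * transport x / x
    = tilt x / mass * (G (transport x) + entropy_cost x (transport x) - F x)
      + entropy_cost (tail x * transport x / x) (tilt x / mass)"
proof -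
  define \<mu> where "\<mu> = tilt x / mass"
  define \<tau> where "\<tau> = tail x"
  define L where "L = transport x"
  have \<mu>: "0 < \<mu>" using tilt_pos mass_pos by (simp add: \<mu>_def)
  have \<tau>: "0 < \<tau>" using tail_pos x by (simp add: \<tau>_def)
  have L: "0 < L" using transport_pos x by (simp add: L_def)
  have "ln \<mu> = F x - x - ln mass"
    using mass_pos by (simp add: \<mu>_def tilt_def ln_div)
  moreover have "ln \<tau> = - L" by (simp add: L_def \<tau>_def transport_def)
  ultimately have ln_ratio: "ln (\<mu> / (\<tau> * L / x)) = F x - x - ln mass + L - ln (L / x)"
    using \<mu> \<tau> L x by (simp add: ln_div ln_mult)
  show ?thesis
    unfolding \<mu>_def [symmetric] \<tau>_def [symmetric] L_def [symmetric] entropy_cost_def ln_ratio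
    using \<tau> L x by (simp add: field_simps)
qed

lemma potential_tendsto_0: "(potential \<longlongrightarrow> 0) (at_right 0)"
proof -
  have d_tail: "(tail has_real_derivative - (tilt 0 / mass)) (at_right 0)"
    by (rule tail_has_real_derivative_at_right_0)
  then have d_transport: "(transport has_real_derivative tilt 0 / mass) (at_right 0)"
    using transport_has_real_derivative[of 0] by (simp add: tail_0)
  have tail_lim: "(tail \<longlongrightarrow> 1) (at_right 0)"
    using DERIV_continuous[OF d_tail] by (simp add: continuous_within tail_0)
  have transport_lim: "(transport \<longlongrightarrow> 0) (at_right 0)"
    using DERIV_continuous[OF d_transport] by (simp add: continuous_within transport_0)
  have "((\<lambda>y. transport y / y) \<longlongrightarrow> tilt 0 / mass) (at_right 0)"
    using d_transport unfolding has_field_derivative_iff by (simp add: transport_0)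
  then have ln_lim: "((\<lambda>y. ln (transport y / y)) \<longlongrightarrow> ln (tilt 0 / mass)) (at_right 0)"
    using tilt_pos[of 0] mass_pos by (intro tendsto_ln) auto
  have "\<forall>\<^sub>F y in at_right 0. transport y \<in> {0..1}"
  proof -
    have "\<forall>\<^sub>F y in at_right 0. transport y < 1"
      using transport_lim by (rule order_tendstoD) simp
    moreover have "\<forall>\<^sub>F y in at_right (0::real). 0 < y"
      by (simp add: eventually_at_right_less)
    ultimately show ?thesis by eventually_elim (auto dest: transport_pos)
  qed
  then have "((\<lambda>y. G_integral (transport y)) \<longlongrightarrow> G_integral 0) (at_right 0)"
    by (intro continuous_on_tendsto_compose[OF continuous_on_G_integral transport_lim]) auto
  then have "(potential \<longlongrightarrow> G_integral 0 - (1 - 1) * ln mass - 1 * 0 * ln (tilt 0 / mass)) (at_right 0)"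
    unfolding potential_def[abs_def]
    by (intro tendsto_intros tail_lim transport_lim ln_lim)
  then show ?thesis by (simp add: G_integral_def)
qed

lemma potential_nonneg:
  assumes "0 < x"
  shows "0 \<le> potential x"
proof (rule DERIV_nonneg_imp_tendsto_at_right_le[OF _ potential_tendsto_0 assms])
  fix y :: real assume y: "0 < y"
  have "0 \<le> G (transport y) + entropy_cost y (transport y) - F y"
    using F_le_G_cost[OF y transport_pos[OF y]] by simp
  moreover have "0 \<le> entropy_cost (tail y * transport y / y) (tilt y / mass)"
    using y tail_pos transport_pos tilt_pos mass_pos by (intro entropy_cost_nonneg) auto
  ultimately have "0 \<le> tilt y / mass * (G (transport y) + entropy_cost y (transport y) - F y)
      + entropy_cost (tail y * transport y / y) (tilt y / mass)"
    using tilt_pos[of y] mass_pos by simp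
  then show "\<exists>D. (potential has_real_derivative D) (at y) \<and> 0 \<le> D"
    using potential_has_real_derivative[OF y] unfolding potential_derivative_eq[OF y] by blast
qed

lemma G_integral_transport_ge:
  assumes x: "0 < x"
  shows "(1 - tail x) * ln mass - tail x * x \<le> G_integral (transport x)"
proof -
  have "0 \<le> entropy_cost x (transport x)"
    using x transport_pos by (intro entropy_cost_nonneg) auto
  then have "- x \<le> transport x * ln (transport x / x)"
    using transport_pos[OF x] by (simp add: entropy_cost_def)
  then have "tail x * (- x) \<le> tail x * (transport x * ln (transport x / x))"
    using x by (intro mult_left_mono less_imp_le[OF tail_pos]) auto
  then show ?thesis using potential_nonneg[OF x] by (simp add: potential_def algebra_simps)
qed

lemma
  shows tail_tendsto_0: "(tail \<longlongrightarrow> 0) at_top"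
    and tail_mult_tendsto_0: "((\<lambda>x. tail x * x) \<longlongrightarrow> 0) at_top"
proof -
  define c where "c = exp C / \<delta> / mass"
  have bounds: "\<forall>\<^sub>F x in at_top. 0 \<le> tail x \<and> tail x \<le> c * exp (- \<delta> * x)"
    using eventually_ge_at_top[of 0]
  proof eventually_elim
    case (elim x)
    then show ?case using tail_pos[of x] tail_le[of x] by (simp add: c_def)
  qed
  show "(tail \<longlongrightarrow> 0) at_top"
  proof (rule tendsto_sandwich[OF _ _ tendsto_const])
    show "((\<lambda>x. c * exp (- \<delta> * x)) \<longlongrightarrow> 0) at_top"
      using \<delta>_pos by real_asymp
  qed (use bounds in \<open>auto elim: eventually_mono\<close>)
  show "((\<lambda>x. tail x * x) \<longlongrightarrow> 0) at_top"
  proof (rule tendsto_sandwich[OF _ _ tendsto_const])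
    show "((\<lambda>x. c * exp (- \<delta> * x) * x) \<longlongrightarrow> 0) at_top"
      using \<delta>_pos by real_asymp
    show "\<forall>\<^sub>F x in at_top. tail x * x \<le> c * exp (- \<delta> * x) * x"
      using bounds eventually_ge_at_top[of 0] by eventually_elim (auto intro: mult_right_mono)
    show "\<forall>\<^sub>F x in at_top. 0 \<le> tail x * x"
      using bounds eventually_ge_at_top[of 0] by eventually_elim simp
  qed
qed

lemma filterlim_transport_at_top: "filterlim transport at_top at_top"
proof (rule filterlim_at_top_mono)
  show "filterlim (\<lambda>x. ln \<delta> + ln mass - C + \<delta> * x) at_top at_top"
    by (intro filterlim_tendsto_add_at_top[OF tendsto_const]
        filterlim_tendsto_pos_mult_at_top[OF tendsto_const \<delta>_pos filterlim_ident])
  show "\<forall>\<^sub>F x in at_top. ln \<delta> + ln mass - C + \<delta> * x \<le> transport x"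
    using eventually_ge_at_top[of 0]
  proof eventually_elim
    case (elim x)
    have "ln (tail x) \<le> ln (exp C * exp (- \<delta> * x) / \<delta> / mass)"
      using tail_le[OF elim] tail_pos[OF elim] by simp
    also have "\<dots> = C - \<delta> * x - ln \<delta> - ln mass"
      using \<delta>_pos mass_pos by (simp add: ln_div ln_mult)
    finally show ?case by (simp add: transport_def)
  qed
qed

lemma G_integral_tendsto: "(G_integral \<longlongrightarrow> (\<integral>y. G y \<partial>eta)) at_top"
proof -
  have [measurable]: "G \<in> borel_measurable borel"
    by (rule borel_measurable_continuous_onI[OF continuous_G])
  have [measurable]: "(\<lambda>x::real. indicator {0..} x * exp (- x)) \<in> borel_measurable borel"
    by measurable
  have "integrable lborel (\<lambda>x. (indicator {0..} x * exp (- x)) *\<^sub>R G x)"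
    using integrable_G unfolding eta_def by (subst (asm) integrable_density) auto
  then have integrable: "set_integrable lborel {0..} (\<lambda>y. G y * exp (- y))"
    unfolding set_integrable_def by (simp add: mult_ac)
  have "(\<integral>y. G y \<partial>eta) = (\<integral>x. (indicator {0..} x * exp (- x)) *\<^sub>R G x \<partial>lborel)"
    unfolding eta_def by (subst integral_density) auto
  also have "\<dots> = (LINT y:{0..}|lborel. G y * exp (- y))"
    unfolding set_lebesgue_integral_def by (simp add: mult_ac)
  finally have integral_eq: "(\<integral>y. G y \<partial>eta) = (LINT y:{0..}|lborel. G y * exp (- y))" .
  have "((\<lambda>b. LINT y:{0..b}|lborel. G y * exp (- y)) \<longlongrightarrow> (\<integral>y. G y \<partial>eta)) at_top"
    unfolding integral_eq by (rule tendsto_set_lebesgue_integral_at_top[OF _ integrable]) simp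
  moreover have "\<forall>\<^sub>F b in at_top. (LINT y:{0..b}|lborel. G y * exp (- y)) = G_integral b"
    using eventually_ge_at_top[of 0]
  proof eventually_elim
    case (elim b)
    have "set_integrable lborel {0..b} (\<lambda>y. G y * exp (- y))"
      by (rule set_integrable_subset[OF integrable]) auto
    then show ?case unfolding G_integral_def by (rule set_borel_integral_eq_integral(2))
  qed
  ultimately show ?thesis by (rule Lim_transform_eventually)
qed

lemma ln_mass_le: "ln mass \<le> (\<integral>y. G y \<partial>eta)"
proof (rule tendsto_le[OF trivial_limit_at_top_linorder])
  show "((\<lambda>x. G_integral (transport x)) \<longlongrightarrow> (\<integral>y. G y \<partial>eta)) at_top"
    by (rule filterlim_compose[OF G_integral_tendsto filterlim_transport_at_top])
  show "((\<lambda>x. (1 - tail x) * ln mass - tail x * x) \<longlongrightarrow> ln mass) at_top"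
    using tendsto_diff[OF tendsto_mult[OF tendsto_diff[OF tendsto_const[of 1] tail_tendsto_0]
          tendsto_const[of "ln mass"]] tail_mult_tendsto_0]
    by simp
  show "\<forall>\<^sub>F x in at_top. (1 - tail x) * ln mass - tail x * x \<le> G_integral (transport x)"
    using eventually_gt_at_top[of 0] by eventually_elim (rule G_integral_transport_ge)
qed

lemma nn_integral_exp_F: "(\<integral>\<^sup>+x. ennreal (exp (F x)) \<partial>eta) = ennreal mass"
proof -
  have [measurable]: "F \<in> borel_measurable borel"
    by (rule borel_measurable_continuous_onI[OF continuous_F])
  have "(\<integral>\<^sup>+x. ennreal (exp (F x)) \<partial>eta)
      = (\<integral>\<^sup>+x. ennreal (indicator {0..} x * exp (- x)) * ennreal (exp (F x)) \<partial>lborel)"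
    unfolding eta_def by (subst nn_integral_density) auto
  also have "\<dots> = (\<integral>\<^sup>+x. ennreal (tilt x) * indicator {0..} x \<partial>lborel)"
    by (intro nn_integral_cong)
      (auto simp: tilt_def indicator_def ennreal_mult[symmetric] exp_diff exp_minus field_simps)
  also have "\<dots> = ennreal mass"
    unfolding mass_def using tilt_pos tilt_integrable_on[of 0]
    by (intro nn_integral_has_integral_lebesgue' integrable_integral) (auto intro: less_imp_le)
  finally show ?thesis .
qed

theorem nn_integral_exp_le: "(\<integral>\<^sup>+x. ennreal (exp (F x)) \<partial>eta) \<le> ennreal (exp (\<integral>x. G x \<partial>eta))"
proof -
  have "mass \<le> exp (\<integral>x. G x \<partial>eta)"
    using ln_mass_le mass_pos by (metis exp_le_cancel_iff exp_ln)
  then show ?thesis by (simp add: nn_integral_exp_F ennreal_leI)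
qed

end

section \<open>Finitely many linear functionals\<close>

lemma continuous_on_MAX:
  fixes f :: "'j \<Rightarrow> 'a::topological_space \<Rightarrow> real"
  assumes "finite J" "J \<noteq> {}" "\<And>j. j \<in> J \<Longrightarrow> continuous_on S (f j)"
  shows "continuous_on S (\<lambda>x. MAX j\<in>J. f j x)"
  using assms by (induct rule: finite_ne_induct) (auto intro: continuous_on_max)

definition Lambda_eta_real :: "real \<Rightarrow> real" where
  "Lambda_eta_real t = - ln (1 - t)"

lemma Lambda_eta_eq_real: "t < 1 \<Longrightarrow> Lambda_eta t = ereal (Lambda_eta_real t)"
  by (simp add: Lambda_eta_def Lambda_eta_real_def)

lemma linear_minus_Lambda_le:
  assumes "t < 1" "0 < x" "0 < y"
  shows "t * x - Lambda_eta_real t \<le> Lambda_eta_real t * (y - 1) + entropy_cost x y"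
proof -
  have "0 \<le> entropy_cost ((1 - t) * x) y"
    using assms by (intro entropy_cost_nonneg) auto
  moreover have "ln (y / ((1 - t) * x)) = ln (y / x) - ln (1 - t)"
    using assms by (simp add: ln_div ln_mult)
  ultimately have "0 \<le> y * (ln (y / x) - ln (1 - t)) - y + (1 - t) * x"
    unfolding entropy_cost_def by simp
  then show ?thesis by (simp add: entropy_cost_def Lambda_eta_real_def algebra_simps)
qed

lemma Max_affine_le:
  fixes t c :: "'j \<Rightarrow> real"
  assumes J: "finite J" "J \<noteq> {}" and "0 \<le> x"
  shows "(MAX j\<in>J. t j * x + c j) \<le> (MAX j\<in>J. c j) + (MAX j\<in>J. t j) * x"
proof -
  have "t j * x + c j \<le> (MAX j\<in>J. c j) + (MAX j\<in>J. t j) * x" if "j \<in> J" for j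
  proof -
    have "c j \<le> (MAX j\<in>J. c j)" using J that by (intro Max_ge) auto
    moreover have "t j * x \<le> (MAX j\<in>J. t j) * x"
      using J that \<open>0 \<le> x\<close> by (intro mult_right_mono Max_ge) auto
    ultimately show ?thesis by linarith
  qed
  then show ?thesis using J by (subst Max_le_iff) auto
qed

lemma Max_linear_minus_Lambda_le:
  assumes J: "finite J" "J \<noteq> {}" and t: "\<And>j. j \<in> J \<Longrightarrow> t j < 1" and "0 < x" "0 < y"
  shows "(MAX j\<in>J. t j * x - Lambda_eta_real (t j) + b j)
    \<le> (MAX j\<in>J. Lambda_eta_real (t j) * (y - 1) + b j) + entropy_cost x y"
proof -
  have "t j * x - Lambda_eta_real (t j) + b j
      \<le> (MAX j\<in>J. Lambda_eta_real (t j) * (y - 1) + b j) + entropy_cost x y" if "j \<in> J" for j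
  proof -
    have "Lambda_eta_real (t j) * (y - 1) + b j \<le> (MAX j\<in>J. Lambda_eta_real (t j) * (y - 1) + b j)"
      using J that by (intro Max_ge) auto
    then show ?thesis using linear_minus_Lambda_le[OF t[OF that] \<open>0 < x\<close> \<open>0 < y\<close>] by linarith
  qed
  then show ?thesis using J by (subst Max_le_iff) auto
qed

lemma nn_integral_exp_Max_le:
  fixes t b :: "'j \<Rightarrow> real"
  assumes J: "finite J" "J \<noteq> {}" and t: "\<And>j. j \<in> J \<Longrightarrow> t j < 1"
  shows "(\<integral>\<^sup>+y. ennreal (exp (MAX j\<in>J. t j * y - Lambda_eta_real (t j) + b j)) \<partial>eta)
    \<le> ennreal (exp (\<integral>y. (MAX j\<in>J. Lambda_eta_real (t j) * (y - 1) + b j) \<partial>eta))"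
proof -
  interpret eta: prob_space eta by (rule prob_space_eta)
  obtain j0 where j0: "j0 \<in> J" using J by auto
  have "eta_transport (\<lambda>y. MAX j\<in>J. t j * y - Lambda_eta_real (t j) + b j)
      (\<lambda>y. MAX j\<in>J. Lambda_eta_real (t j) * (y - 1) + b j) (1 - (MAX j\<in>J. t j))
      (MAX j\<in>J. b j - Lambda_eta_real (t j)) (b j0 - Lambda_eta_real (t j0)) \<bar>t j0\<bar>"
  proof
    show "continuous_on UNIV (\<lambda>y. MAX j\<in>J. t j * y - Lambda_eta_real (t j) + b j)"
      by (intro continuous_on_MAX J continuous_intros)
    show "continuous_on UNIV (\<lambda>y. MAX j\<in>J. Lambda_eta_real (t j) * (y - 1) + b j)"
      by (intro continuous_on_MAX J continuous_intros)
    show "integrable eta (\<lambda>y. MAX j\<in>J. Lambda_eta_real (t j) * (y - 1) + b j)"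
      using integrable_eta_ident by (intro integrable_MAX J) auto
    show "0 < 1 - (MAX j\<in>J. t j)" using J t by simp
    show "(MAX j\<in>J. t j * x - Lambda_eta_real (t j) + b j)
        \<le> (MAX j\<in>J. Lambda_eta_real (t j) * (y - 1) + b j) + entropy_cost x y"
      if "0 < x" "0 < y" for x y
      by (rule Max_linear_minus_Lambda_le[OF J t that])
    show "(MAX j\<in>J. t j * x - Lambda_eta_real (t j) + b j)
        \<le> (MAX j\<in>J. b j - Lambda_eta_real (t j)) + (1 - (1 - (MAX j\<in>J. t j))) * x"
      if "0 \<le> x" for x
      using Max_affine_le[OF J that, of t "\<lambda>j. b j - Lambda_eta_real (t j)"] by (simp add: algebra_simps)
    show "b j0 - Lambda_eta_real (t j0) - \<bar>t j0\<bar> * x \<le> (MAX j\<in>J. t j * x - Lambda_eta_real (t j) + b j)"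
      if "0 \<le> x" for x
    proof -
      have "- \<bar>t j0\<bar> * x \<le> t j0 * x" using \<open>0 \<le> x\<close> by (intro mult_right_mono) auto
      moreover have "t j0 * x - Lambda_eta_real (t j0) + b j0 \<le> (MAX j\<in>J. t j * x - Lambda_eta_real (t j) + b j)"
        using J j0 by (intro Max_ge) auto
      ultimately show ?thesis by linarith
    qed
  qed simp
  then show ?thesis by (rule eta_transport.nn_integral_exp_le)
qed

section \<open>Tensorisation\<close>

lemma (in product_sigma_finite) integrable_product_integral_insert:
  fixes f :: "_ \<Rightarrow> real"
  assumes I: "finite I" "i \<notin> I" and f: "integrable (Pi\<^sub>M (insert i I) M) f"
  shows "integrable (Pi\<^sub>M I M) (\<lambda>x. \<integral>y. f (x(i := y)) \<partial>M i)"
proof -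
  interpret I: finite_product_sigma_finite M I by standard fact
  interpret i: finite_product_sigma_finite M "{i}" by standard simp
  interpret P: pair_sigma_finite "Pi\<^sub>M I M" "Pi\<^sub>M {i} M" ..
  have "distr (Pi\<^sub>M I M \<Otimes>\<^sub>M Pi\<^sub>M {i} M) (Pi\<^sub>M (insert i I) M) (merge I {i}) = Pi\<^sub>M (insert i I) M"
    using distr_merge[of I "{i}"] I by simp
  then have "integrable (Pi\<^sub>M I M \<Otimes>\<^sub>M Pi\<^sub>M {i} M) (\<lambda>z. f (merge I {i} z))"
    using f by (intro integrable_distr[OF measurable_merge]) simp
  then have int: "integrable (Pi\<^sub>M I M) (\<lambda>x. \<integral>u. f (merge I {i} (x, u)) \<partial>Pi\<^sub>M {i} M)"
    by (rule P.integrable_fst')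
  have eq: "(\<integral>u. f (merge I {i} (x, u)) \<partial>Pi\<^sub>M {i} M) = (\<integral>y. f (x(i := y)) \<partial>M i)"
    if x: "x \<in> space (Pi\<^sub>M I M)" for x
  proof -
    have "(\<lambda>y. f (x(i := y))) \<in> borel_measurable (M i)"
      using measurable_comp[OF measurable_component_update borel_measurable_integrable[OF f], OF x \<open>i \<notin> I\<close>]
      unfolding comp_def .
    then have "(\<integral>y. f (x(i := y)) \<partial>M i) = (\<integral>u. f (x(i := u i)) \<partial>Pi\<^sub>M {i} M)"
      by (rule product_integral_singleton[symmetric])
    moreover have "(\<integral>u. f (merge I {i} (x, u)) \<partial>Pi\<^sub>M {i} M) = (\<integral>u. f (x(i := u i)) \<partial>Pi\<^sub>M {i} M)"
    proof (rule Bochner_Integration.integral_cong[OF refl])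
      fix u assume "u \<in> space (Pi\<^sub>M {i} M)"
      then have "merge I {i} (x, u) = x(i := u i)"
        using x I by (auto simp: merge_def space_PiM extensional_def PiE_def fun_eq_iff)
      then show "f (merge I {i} (x, u)) = f (x(i := u i))" by simp
    qed
    ultimately show ?thesis by simp
  qed
  show ?thesis by (rule Bochner_Integration.integrable_cong[OF refl, THEN iffD1, OF eq int])
qed

lemma exp_integral_le_nn_integral_exp:
  fixes f :: "'a \<Rightarrow> real"
  assumes "prob_space M" and f: "integrable M f"
  shows "ennreal (exp (\<integral>x. f x \<partial>M)) \<le> (\<integral>\<^sup>+ x. ennreal (exp (f x)) \<partial>M)"
proof -
  interpret prob_space M by fact
  \<comment> \<open>Tangent line of \<open>exp\<close> at the mean; unlike \<open>jensens_inequality\<close>, this needs no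
    integrability of \<open>exp \<circ> f\<close>.\<close>
  define m where "m = (\<integral>x. f x \<partial>M)"
  define h where "h x = exp m * (1 + f x - m)" for x
  have h: "integrable M h" unfolding h_def using f by auto
  have integral_h: "(\<integral>x. h x \<partial>M) = exp m"
    unfolding h_def m_def using f by (simp add: prob_space)
  have h_le: "h x \<le> exp (f x)" for x
  proof -
    have "exp m * (1 + (f x - m)) \<le> exp m * exp (f x - m)"
      by (intro mult_left_mono exp_ge_add_one_self) auto
    then show ?thesis unfolding h_def by (simp add: exp_diff add_diff_eq)
  qed
  have "exp m \<le> (\<integral>x. max (h x) 0 \<partial>M)"
    unfolding integral_h[symmetric] using h by (intro integral_mono) auto
  also have "\<dots> = enn2real (\<integral>\<^sup>+ x. ennreal (max (h x) 0) \<partial>M)"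
    using h by (intro integral_eq_nn_integral) auto
  finally have "ennreal (exp m) \<le> (\<integral>\<^sup>+ x. ennreal (max (h x) 0) \<partial>M)"
    by (rule order.trans[OF ennreal_leI]) (auto simp: ennreal_enn2real_if)
  also have "\<dots> \<le> (\<integral>\<^sup>+ x. ennreal (exp (f x)) \<partial>M)"
    using h_le by (intro nn_integral_mono ennreal_leI) (auto simp: max_def)
  finally show ?thesis unfolding m_def .
qed

lemma exp_integral_le_exp_mult_nn_integral:
  fixes f g :: "'a \<Rightarrow> real"
  assumes M: "prob_space M" and f: "integrable M f" and g: "integrable M g"
  shows "ennreal (exp (\<integral>y. f y \<partial>M))
    \<le> ennreal (exp (\<integral>y. g y \<partial>M)) * (\<integral>\<^sup>+y. ennreal (exp (f y - g y)) \<partial>M)"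
proof -
  have "ennreal (exp (\<integral>y. f y \<partial>M))
      = ennreal (exp (\<integral>y. g y \<partial>M)) * ennreal (exp (\<integral>y. f y - g y \<partial>M))"
    using f g by (simp add: exp_add[symmetric] ennreal_mult[symmetric])
  also have "\<dots> \<le> ennreal (exp (\<integral>y. g y \<partial>M)) * (\<integral>\<^sup>+y. ennreal (exp (f y - g y)) \<partial>M)"
    using f g by (intro mult_left_mono exp_integral_le_nn_integral_exp[OF M]) auto
  finally show ?thesis .
qed

lemma nn_integral_exp_integral_le:
  fixes K :: "'a \<Rightarrow> 'b \<Rightarrow> real" and W :: "'a \<Rightarrow> real"
  assumes "prob_space M" "prob_space N"
    and K: "(\<lambda>(y, x). K y x) \<in> borel_measurable (M \<Otimes>\<^sub>M N)"
    and integrable_K: "\<And>x. x \<in> space N \<Longrightarrow> integrable M (\<lambda>y. K y x)"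
    and integrable_W: "integrable M W"
    and bound: "\<And>y. y \<in> space M \<Longrightarrow> (\<integral>\<^sup>+x. ennreal (exp (K y x)) \<partial>N) \<le> ennreal (exp (W y))"
  shows "(\<integral>\<^sup>+x. ennreal (exp (\<integral>y. K y x \<partial>M)) \<partial>N) \<le> ennreal (exp (\<integral>y. W y \<partial>M))"
proof -
  interpret M: prob_space M by fact
  interpret N: prob_space N by fact
  interpret pair_sigma_finite M N ..
  have [measurable]: "W \<in> borel_measurable M" using integrable_W by (rule borel_measurable_integrable)
  have K' [measurable]: "(\<lambda>z. K (fst z) (snd z)) \<in> borel_measurable (M \<Otimes>\<^sub>M N)"
    using K by (simp add: case_prod_beta')
  have [measurable]: "(\<lambda>z. K (snd z) (fst z)) \<in> borel_measurable (N \<Otimes>\<^sub>M M)"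
    using measurable_pair_swap[OF K] by (simp add: case_prod_beta')
  let ?I = "\<integral>y. W y \<partial>M"
  let ?E = "\<lambda>y x. ennreal (exp (K y x - W y))"
  have Jensen: "ennreal (exp (\<integral>y. K y x \<partial>M)) \<le> ennreal (exp ?I) * (\<integral>\<^sup>+y. ?E y x \<partial>M)"
    if "x \<in> space N" for x
    using integrable_K[OF that] integrable_W by (rule exp_integral_le_exp_mult_nn_integral[OF M.prob_space_axioms])
  have "(\<integral>\<^sup>+x. ennreal (exp (\<integral>y. K y x \<partial>M)) \<partial>N) \<le> (\<integral>\<^sup>+x. ennreal (exp ?I) * (\<integral>\<^sup>+y. ?E y x \<partial>M) \<partial>N)"
    by (intro nn_integral_mono Jensen)
  also have "\<dots> = ennreal (exp ?I) * (\<integral>\<^sup>+x. (\<integral>\<^sup>+y. ?E y x \<partial>M) \<partial>N)"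
    by (intro nn_integral_cmult) measurable
  also have "\<dots> = ennreal (exp ?I) * (\<integral>\<^sup>+y. (\<integral>\<^sup>+x. ?E y x \<partial>N) \<partial>M)"
    by (subst Fubini'[of ?E]) (simp_all add: case_prod_beta')
  also have "\<dots> \<le> ennreal (exp ?I) * (\<integral>\<^sup>+y. 1 \<partial>M)"
  proof (intro mult_left_mono nn_integral_mono)
    fix y assume y: "y \<in> space M"
    have "(\<integral>\<^sup>+x. ?E y x \<partial>N) = (\<integral>\<^sup>+x. ennreal (exp (- W y)) * ennreal (exp (K y x)) \<partial>N)"
      by (intro nn_integral_cong) (simp add: exp_diff exp_minus ennreal_mult[symmetric] field_simps)
    also have "\<dots> = ennreal (exp (- W y)) * (\<integral>\<^sup>+x. ennreal (exp (K y x)) \<partial>N)"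
      using measurable_Pair2[OF K' y] by (intro nn_integral_cmult) simp
    also have "\<dots> \<le> ennreal (exp (- W y)) * ennreal (exp (W y))"
      by (intro mult_left_mono bound y) auto
    finally show "(\<integral>\<^sup>+x. ?E y x \<partial>N) \<le> 1"
      by (simp add: ennreal_mult[symmetric] exp_minus)
  qed auto
  finally show ?thesis by (simp add: M.emeasure_space_1)
qed

lemma prob_space_PiM_eta: "prob_space (Pi\<^sub>M I (\<lambda>_. eta))"
  by (intro prob_space_PiM prob_space_eta)

lemma integrable_PiM_eta_component:
  assumes "k \<in> I"
  shows "integrable (Pi\<^sub>M I (\<lambda>_. eta)) (\<lambda>x. x k)"
proof -
  have "distr (Pi\<^sub>M I (\<lambda>_. eta)) eta (\<lambda>x. x k) = eta"
    by (rule distr_PiM_component[OF prob_space_eta assms])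
  then have "integrable (distr (Pi\<^sub>M I (\<lambda>_. eta)) eta (\<lambda>x. x k)) (\<lambda>x. x)"
    using integrable_eta_ident by simp
  moreover have "(\<lambda>x::real. x) \<in> borel_measurable eta" by simp
  ultimately show ?thesis using assms by (subst (asm) integrable_distr_eq) auto
qed

lemma integrable_Max_sum_Lambda:
  fixes t :: "'j \<Rightarrow> 'n \<Rightarrow> real"
  assumes "finite J" "J \<noteq> {}"
  shows "integrable (Pi\<^sub>M I (\<lambda>_. eta)) (\<lambda>x. MAX j\<in>J. (\<Sum>k\<in>I. Lambda_eta_real (t j k) * (x k - 1)) + a j)"
proof -
  interpret prob_space "Pi\<^sub>M I (\<lambda>_. eta)" by (rule prob_space_PiM_eta)
  have "integrable (Pi\<^sub>M I (\<lambda>_. eta)) (\<lambda>x. Lambda_eta_real (t j k) * (x k - 1))" if "k \<in> I" for j k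
    using integrable_PiM_eta_component[OF that] by simp
  then show ?thesis by (intro integrable_MAX assms) auto
qed

lemma nn_integral_exp_Max_sum_insert:
  fixes t :: "'j \<Rightarrow> 'n \<Rightarrow> real" and a :: "'j \<Rightarrow> real"
  assumes I: "finite I" "i \<notin> I" and J: "finite J"
  shows "(\<integral>\<^sup>+x. ennreal (exp (MAX j\<in>J. (\<Sum>k\<in>insert i I. t j k * x k - Lambda_eta_real (t j k)) + a j))
      \<partial>Pi\<^sub>M (insert i I) (\<lambda>_. eta))
    = (\<integral>\<^sup>+y. (\<integral>\<^sup>+x. ennreal (exp (MAX j\<in>J. (\<Sum>k\<in>I. t j k * x k - Lambda_eta_real (t j k))
      + (a j + (t j i * y - Lambda_eta_real (t j i))))) \<partial>Pi\<^sub>M I (\<lambda>_. eta)) \<partial>eta)"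
proof -
  interpret product_sigma_finite "\<lambda>_::'n. eta"
    unfolding product_sigma_finite_def using prob_space_eta prob_space_imp_sigma_finite by blast
  have [simp]: "k \<in> I \<Longrightarrow> k \<noteq> i" for k
    using I by auto
  have "(\<lambda>x. ennreal (exp (MAX j\<in>J. (\<Sum>k\<in>insert i I. t j k * x k - Lambda_eta_real (t j k)) + a j)))
      \<in> borel_measurable (Pi\<^sub>M (insert i I) (\<lambda>_. eta))"
    using J by measurable
  then show ?thesis
    using I by (subst product_nn_integral_insert_rev[OF I]) (simp_all add: ac_simps cong: sum.cong_simp)
qed

lemma nn_integral_exp_integral_Max_le:
  fixes t :: "'j \<Rightarrow> real" and c :: "'j \<Rightarrow> 'a \<Rightarrow> real"
  assumes P: "prob_space P" and J: "finite J" "J \<noteq> {}" and t: "\<And>j. j \<in> J \<Longrightarrow> t j < 1"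
    and c: "\<And>j. j \<in> J \<Longrightarrow> integrable P (c j)"
    and W: "integrable P (\<lambda>x. \<integral>y. (MAX j\<in>J. Lambda_eta_real (t j) * (y - 1) + c j x) \<partial>eta)"
  shows "(\<integral>\<^sup>+y. ennreal (exp (\<integral>x. (MAX j\<in>J. t j * y - Lambda_eta_real (t j) + c j x) \<partial>P)) \<partial>eta)
    \<le> ennreal (exp (\<integral>x. (\<integral>y. (MAX j\<in>J. Lambda_eta_real (t j) * (y - 1) + c j x) \<partial>eta) \<partial>P))"
proof (rule nn_integral_exp_integral_le[OF P prob_space_eta _ _ W])
  interpret P: prob_space P by (rule P)
  have "(\<lambda>z. t j * snd z - Lambda_eta_real (t j) + c j (fst z)) \<in> borel_measurable (P \<Otimes>\<^sub>M eta)"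
    if "j \<in> J" for j
    using borel_measurable_integrable[OF c[OF that]] by measurable
  then show "(\<lambda>(x, y). MAX j\<in>J. t j * y - Lambda_eta_real (t j) + c j x) \<in> borel_measurable (P \<Otimes>\<^sub>M eta)"
    unfolding case_prod_beta' using J by (intro borel_measurable_Max) auto
  show "integrable P (\<lambda>x. MAX j\<in>J. t j * y - Lambda_eta_real (t j) + c j x)" for y
    using c by (intro integrable_MAX J) auto
  show "(\<integral>\<^sup>+y. ennreal (exp (MAX j\<in>J. t j * y - Lambda_eta_real (t j) + c j x)) \<partial>eta)
    \<le> ennreal (exp (\<integral>y. (MAX j\<in>J. Lambda_eta_real (t j) * (y - 1) + c j x) \<partial>eta))" for x
    by (rule nn_integral_exp_Max_le[OF J t])
qed

lemma nn_integral_exp_Max_sum_le: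
  fixes t :: "'j \<Rightarrow> 'n \<Rightarrow> real" and a :: "'j \<Rightarrow> real" and I :: "'n set"
  assumes I: "finite I" and J: "finite J" "J \<noteq> {}" and t: "\<And>j k. j \<in> J \<Longrightarrow> t j k < 1"
  shows "(\<integral>\<^sup>+x. ennreal (exp (MAX j\<in>J. (\<Sum>k\<in>I. t j k * x k - Lambda_eta_real (t j k)) + a j))
      \<partial>Pi\<^sub>M I (\<lambda>_. eta))
    \<le> ennreal (exp (\<integral>x. (MAX j\<in>J. (\<Sum>k\<in>I. Lambda_eta_real (t j k) * (x k - 1)) + a j)
      \<partial>Pi\<^sub>M I (\<lambda>_. eta)))"
  using I
proof (induction I arbitrary: a rule: finite_induct)
  case empty
  interpret prob_space "Pi\<^sub>M {} (\<lambda>_::'n. eta)" by (rule prob_space_PiM_eta)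
  show ?case by (simp add: emeasure_space_1 prob_space)
next
  case (insert i I)
  interpret product_sigma_finite "\<lambda>_::'n. eta"
    unfolding product_sigma_finite_def using prob_space_eta prob_space_imp_sigma_finite by blast
  let ?P = "Pi\<^sub>M I (\<lambda>_::'n. eta)"
  let ?c = "\<lambda>j x. (\<Sum>k\<in>I. Lambda_eta_real (t j k) * (x k - 1)) + a j"
  define \<Psi> where "\<Psi> x = (MAX j\<in>J. (\<Sum>k\<in>insert i I. Lambda_eta_real (t j k) * (x k - 1)) + a j)" for x
  have \<Psi>: "integrable (Pi\<^sub>M (insert i I) (\<lambda>_. eta)) \<Psi>"
    unfolding \<Psi>_def by (rule integrable_Max_sum_Lambda[OF J])
  have [simp]: "k \<in> I \<Longrightarrow> k \<noteq> i" for k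
    using insert.hyps by auto
  have \<Psi>_upd: "\<Psi> (x(i := y)) = (MAX j\<in>J. Lambda_eta_real (t j i) * (y - 1) + ?c j x)" for x y
    unfolding \<Psi>_def using insert.hyps by (simp add: ac_simps cong: sum.cong_simp)
  have "(\<integral>\<^sup>+x. ennreal (exp (MAX j\<in>J. (\<Sum>k\<in>insert i I. t j k * x k - Lambda_eta_real (t j k)) + a j))
      \<partial>Pi\<^sub>M (insert i I) (\<lambda>_. eta))
    = (\<integral>\<^sup>+y. (\<integral>\<^sup>+x. ennreal (exp (MAX j\<in>J. (\<Sum>k\<in>I. t j k * x k - Lambda_eta_real (t j k))
      + (a j + (t j i * y - Lambda_eta_real (t j i))))) \<partial>?P) \<partial>eta)"
    by (rule nn_integral_exp_Max_sum_insert[OF insert.hyps J(1)])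
  also have "\<dots> \<le> (\<integral>\<^sup>+y. ennreal (exp (\<integral>x. (MAX j\<in>J. (\<Sum>k\<in>I. Lambda_eta_real (t j k) * (x k - 1))
      + (a j + (t j i * y - Lambda_eta_real (t j i)))) \<partial>?P)) \<partial>eta)"
    by (intro nn_integral_mono insert.IH)
  also have "\<dots> = (\<integral>\<^sup>+y. ennreal (exp (\<integral>x. (MAX j\<in>J. t j i * y - Lambda_eta_real (t j i)
      + ?c j x) \<partial>?P)) \<partial>eta)"
    by (simp add: ac_simps)
  also have "\<dots> \<le> ennreal (exp (\<integral>x. (\<integral>y. \<Psi> (x(i := y)) \<partial>eta) \<partial>?P))"
    unfolding \<Psi>_upd
  proof (rule nn_integral_exp_integral_Max_le[OF prob_space_PiM_eta J t])
    interpret prob_space ?P by (rule prob_space_PiM_eta)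
    show "integrable ?P (?c j)" for j
      using integrable_Max_sum_Lambda[where J="{j}" and t=t and I=I and a="\<lambda>_. a j"] by simp
    show "integrable ?P (\<lambda>x. \<integral>y. (MAX j\<in>J. Lambda_eta_real (t j i) * (y - 1) + ?c j x) \<partial>eta)"
      using integrable_product_integral_insert[OF insert.hyps \<Psi>] unfolding \<Psi>_upd .
  qed
  also have "(\<integral>x. (\<integral>y. \<Psi> (x(i := y)) \<partial>eta) \<partial>?P) = (\<integral>x. \<Psi> x \<partial>Pi\<^sub>M (insert i I) (\<lambda>_. eta))"
    by (rule product_integral_insert[OF insert.hyps \<Psi>, symmetric])
  finally show ?case unfolding \<Psi>_def .
qed

section \<open>Countable suprema\<close>

lemma ereal_exp_le_exp: "y \<le> ereal r \<Longrightarrow> ereal_exp y \<le> ennreal (exp r)"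
  by (cases y) (auto simp: ereal_exp_def intro: ennreal_leI)

lemma ennreal_ln_le: "Z \<le> ennreal (exp r) \<Longrightarrow> ennreal_ln Z \<le> ereal r"
proof (cases Z rule: ennreal_cases)
  case (real z)
  moreover assume "Z \<le> ennreal (exp r)"
  ultimately show ?thesis
    by (cases "z = 0") (auto simp: ennreal_ln_def ln_le_cancel_iff[symmetric] ennreal_le_iff)
qed (simp add: top_unique)

lemma ereal_exp_SUP_le:
  assumes "\<And>\<xi>. \<xi> \<in> V \<Longrightarrow> ennreal (exp (f \<xi>)) \<le> S"
  shows "ereal_exp (SUP \<xi>\<in>V. ereal (f \<xi>)) \<le> S"
proof (cases "V = {}")
  case True
  then show ?thesis by (simp add: ereal_exp_def bot_ereal_def)
next
  case False
  show ?thesis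
  proof (cases S rule: ennreal_cases)
    case (real s)
    from False obtain \<xi>0 where "\<xi>0 \<in> V" by auto
    then have "0 < s" using assms[of \<xi>0] real by (simp add: ennreal_le_iff2 less_le_trans[OF exp_gt_zero])
    have "(SUP \<xi>\<in>V. ereal (f \<xi>)) \<le> ereal (ln s)"
    proof (rule SUP_least)
      fix \<xi> assume "\<xi> \<in> V"
      then have "exp (f \<xi>) \<le> s" using assms[of \<xi>] real by simp
      then show "ereal (f \<xi>) \<le> ereal (ln s)" using \<open>0 < s\<close> by (simp add: ln_ge_iff)
    qed
    then show ?thesis using \<open>0 < s\<close> real by (metis ereal_exp_le_exp exp_ln)
  qed simp
qed

lemma nn_integral_ereal_exp_SUP_le:
  assumes V: "countable V" and f: "\<And>\<xi>. \<xi> \<in> V \<Longrightarrow> f \<xi> \<in> borel_measurable M"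
    and bound: "\<And>W. finite W \<Longrightarrow> W \<noteq> {} \<Longrightarrow> W \<subseteq> V \<Longrightarrow> (\<integral>\<^sup>+x. ennreal (exp (MAX \<xi>\<in>W. f \<xi> x)) \<partial>M) \<le> c"
  shows "(\<integral>\<^sup>+x. ereal_exp (SUP \<xi>\<in>V. ereal (f \<xi> x)) \<partial>M) \<le> c"
proof (cases "V = {}")
  case True
  then show ?thesis by (simp add: ereal_exp_def bot_ereal_def)
next
  case False
  define W where "W n = from_nat_into V ` {..n}" for n
  have W: "finite (W n)" "W n \<noteq> {}" "W n \<subseteq> V" for n
    unfolding W_def using False by (auto intro: from_nat_into)
  have W_mono: "W m \<subseteq> W n" if "m \<le> n" for m n
    unfolding W_def using that by auto
  have Max_W_mono: "(MAX \<xi>\<in>W m. f \<xi> x) \<le> (MAX \<xi>\<in>W n. f \<xi> x)" if "m \<le> n" for m n x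
    using W W_mono[OF that] by (intro Max_mono) auto
  have "ereal_exp (SUP \<xi>\<in>V. ereal (f \<xi> x)) \<le> (SUP n. ennreal (exp (MAX \<xi>\<in>W n. f \<xi> x)))" for x
  proof (rule ereal_exp_SUP_le)
    fix \<xi> assume "\<xi> \<in> V"
    then obtain n where "\<xi> = from_nat_into V n" using from_nat_into_surj[OF V] by metis
    then have "f \<xi> x \<le> (MAX \<xi>\<in>W n. f \<xi> x)" using W by (intro Max_ge) (auto simp: W_def)
    then have "ennreal (exp (f \<xi> x)) \<le> ennreal (exp (MAX \<xi>\<in>W n. f \<xi> x))" by (intro ennreal_leI) simp
    also have "\<dots> \<le> (SUP n. ennreal (exp (MAX \<xi>\<in>W n. f \<xi> x)))" by (rule SUP_upper) simp
    finally show "ennreal (exp (f \<xi> x)) \<le> \<dots>" .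
  qed
  then have "(\<integral>\<^sup>+x. ereal_exp (SUP \<xi>\<in>V. ereal (f \<xi> x)) \<partial>M)
      \<le> (\<integral>\<^sup>+x. (SUP n. ennreal (exp (MAX \<xi>\<in>W n. f \<xi> x))) \<partial>M)"
    by (intro nn_integral_mono)
  also have "\<dots> = (SUP n. \<integral>\<^sup>+x. ennreal (exp (MAX \<xi>\<in>W n. f \<xi> x)) \<partial>M)"
  proof (rule nn_integral_monotone_convergence_SUP)
    show "incseq (\<lambda>n x. ennreal (exp (MAX \<xi>\<in>W n. f \<xi> x)))"
      using Max_W_mono by (intro monoI le_funI ennreal_leI) simp
    show "(\<lambda>x. ennreal (exp (MAX \<xi>\<in>W n. f \<xi> x))) \<in> borel_measurable M" for n
    proof -
      have "(\<lambda>x. MAX \<xi>\<in>W n. f \<xi> x) \<in> borel_measurable M"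
        using W(1) f subsetD[OF W(3)] by (intro borel_measurable_Max) auto
      then show ?thesis by measurable
    qed
  qed
  also have "\<dots> \<le> c" using W by (intro SUP_least bound)
  finally show ?thesis .
qed

lemma ennreal_ln_nn_integral_ereal_exp_SUP_le:
  assumes V: "countable V" and f: "\<And>\<xi>. \<xi> \<in> V \<Longrightarrow> f \<xi> \<in> borel_measurable M"
    and bound: "\<And>W. finite W \<Longrightarrow> W \<noteq> {} \<Longrightarrow> W \<subseteq> V \<Longrightarrow>
      (\<integral>\<^sup>+x. ennreal (exp (MAX \<xi>\<in>W. f \<xi> x)) \<partial>M) \<le> ennreal (exp (g W))"
    and g: "\<And>W. finite W \<Longrightarrow> W \<noteq> {} \<Longrightarrow> W \<subseteq> V \<Longrightarrow> ereal (g W) \<le> R"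
  shows "ennreal_ln (\<integral>\<^sup>+x. ereal_exp (SUP \<xi>\<in>V. ereal (f \<xi> x)) \<partial>M) \<le> R"
proof (cases "V = {}")
  case True
  then show ?thesis by (simp add: ereal_exp_def bot_ereal_def ennreal_ln_def)
next
  case False
  then obtain \<xi>0 where "\<xi>0 \<in> V" by auto
  then have "R \<noteq> -\<infinity>" using g[of "{\<xi>0}"] by auto
  then consider "R = \<infinity>" | r where "R = ereal r" by (cases R) auto
  then show ?thesis
  proof cases
    case 2
    have "(\<integral>\<^sup>+x. ereal_exp (SUP \<xi>\<in>V. ereal (f \<xi> x)) \<partial>M) \<le> ennreal (exp r)"
    proof (rule nn_integral_ereal_exp_SUP_le[OF V f])
      fix W assume W: "finite W" "W \<noteq> {}" "W \<subseteq> V"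
      have "(\<integral>\<^sup>+x. ennreal (exp (MAX \<xi>\<in>W. f \<xi> x)) \<partial>M) \<le> ennreal (exp (g W))" by (rule bound[OF W])
      also have "\<dots> \<le> ennreal (exp r)" using g[OF W] 2 by (intro ennreal_leI) simp
      finally show "(\<integral>\<^sup>+x. ennreal (exp (MAX \<xi>\<in>W. f \<xi> x)) \<partial>M) \<le> ennreal (exp r)" .
    qed auto
    then show ?thesis unfolding 2 by (rule ennreal_ln_le)
  qed simp
qed


lemma ereal_integral_real:
  fixes f :: "'a \<Rightarrow> real"
  assumes "integrable M f"
  shows "ereal_integral M (\<lambda>x. ereal (f x)) = ereal (\<integral>x. f x \<partial>M)"
proof -
  obtain r q where "0 \<le> r" "0 \<le> q" "(\<integral>\<^sup>+x. ennreal (f x) \<partial>M) = ennreal r"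
    "(\<integral>\<^sup>+x. ennreal (- f x) \<partial>M) = ennreal q" "(\<integral>x. f x \<partial>M) = r - q"
    using integrableE[OF assms] by metis
  then show ?thesis by (simp add: ereal_integral_def)
qed

lemma ereal_integral_mono:
  assumes "\<And>x. x \<in> space M \<Longrightarrow> f x \<le> g x"
  shows "ereal_integral M f \<le> ereal_integral M g"
proof -
  have "(\<integral>\<^sup>+x. e2ennreal (f x) \<partial>M) \<le> (\<integral>\<^sup>+x. e2ennreal (g x) \<partial>M)"
    using assms by (intro nn_integral_mono e2ennreal_mono) auto
  moreover have "(\<integral>\<^sup>+x. e2ennreal (- g x) \<partial>M) \<le> (\<integral>\<^sup>+x. e2ennreal (- f x) \<partial>M)"
    using assms by (intro nn_integral_mono e2ennreal_mono) auto
  ultimately show ?thesis unfolding ereal_integral_def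
    by (intro ereal_minus_mono) (auto simp: less_eq_ennreal.rep_eq)
qed

lemma integral_Max_le_ereal_integral_SUP:
  assumes W: "finite W" "W \<noteq> {}" "W \<subseteq> V" and f: "integrable M (\<lambda>x. MAX \<xi>\<in>W. f \<xi> x)"
    and le: "\<And>\<xi> x. \<xi> \<in> W \<Longrightarrow> ereal (f \<xi> x) \<le> g \<xi> x"
  shows "ereal (\<integral>x. (MAX \<xi>\<in>W. f \<xi> x) \<partial>M) \<le> ereal_integral M (\<lambda>x. SUP \<xi>\<in>V. g \<xi> x)"
  unfolding ereal_integral_real[OF f, symmetric]
proof (rule ereal_integral_mono)
  fix x
  have "(MAX \<xi>\<in>W. f \<xi> x) \<in> (\<lambda>\<xi>. f \<xi> x) ` W" using W by (intro Max_in) auto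
  then obtain \<xi> where "\<xi> \<in> W" "(MAX \<xi>\<in>W. f \<xi> x) = f \<xi> x" by auto
  then show "ereal (MAX \<xi>\<in>W. f \<xi> x) \<le> (SUP \<xi>\<in>V. g \<xi> x)"
    using le W(3) by (metis SUP_upper2 subsetD)
qed

lemma inner_fun_minus_Lambda_eta_n:
  assumes "\<forall>i. \<xi> i < 1"
  shows "ereal (inner_fun \<xi> x) - Lambda_eta_n \<xi> = ereal (\<Sum>i\<in>UNIV. \<xi> i * x i - Lambda_eta_real (\<xi> i))"
  using assms by (simp add: inner_fun_def Lambda_eta_n_def Lambda_eta_eq_real sum_subtractf)

lemma inner_fun_minus_Lambda_eta_n_MInfty:
  assumes "\<not> (\<forall>i. \<xi> i < 1)"
  shows "ereal (inner_fun \<xi> x) - Lambda_eta_n \<xi> = - \<infinity>"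
proof -
  from assms obtain i where "\<not> \<xi> i < 1" by auto
  then have "Lambda_eta (\<xi> i) = \<infinity>" by (simp add: Lambda_eta_def)
  then have "Lambda_eta_n \<xi> = \<infinity>"
    using \<open>\<not> \<xi> i < 1\<close> unfolding Lambda_eta_n_def by (subst sum_Pinfty) (auto simp: Lambda_eta_def)
  then show ?thesis by simp
qed

lemma inner_Lambda_eq:
  assumes "\<forall>i. \<xi> i < 1"
  shows "inner_Lambda \<xi> x = ereal (\<Sum>i\<in>UNIV. Lambda_eta_real (\<xi> i) * (x i - 1))"
  using assms by (simp add: inner_Lambda_def Lambda_eta_eq_real)

lemma SUP_inner_fun_minus_Lambda_eta_n:
  "(SUP \<xi>\<in>V. ereal (inner_fun \<xi> x) - Lambda_eta_n \<xi>)
    = (SUP \<xi>\<in>{\<xi> \<in> V. \<forall>i. \<xi> i < 1}. ereal (\<Sum>i\<in>UNIV. \<xi> i * x i - Lambda_eta_real (\<xi> i)))"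
proof -
  let ?h = "\<lambda>\<xi>. ereal (inner_fun \<xi> x) - Lambda_eta_n \<xi>"
  let ?V' = "{\<xi> \<in> V. \<forall>i. \<xi> i < 1}"
  have "V = ?V' \<union> (V - ?V')" by auto
  then have "(SUP \<xi>\<in>V. ?h \<xi>) = (SUP \<xi>\<in>?V' \<union> (V - ?V'). ?h \<xi>)"
    by (rule arg_cong[where f="\<lambda>A. SUP \<xi>\<in>A. ?h \<xi>"])
  also have "\<dots> = sup (SUP \<xi>\<in>?V'. ?h \<xi>) (SUP \<xi>\<in>V - ?V'. ?h \<xi>)"
    by (rule SUP_union)
  also have "(SUP \<xi>\<in>V - ?V'. ?h \<xi>) = bot"
    unfolding SUP_bot_conv by (auto simp: inner_fun_minus_Lambda_eta_n_MInfty bot_ereal_def)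
  finally show ?thesis by (simp add: inner_fun_minus_Lambda_eta_n)
qed

lemma measurable_eta_n_component [measurable]: "(\<lambda>x. x i) \<in> borel_measurable eta_n"
  unfolding eta_n_def by measurable

theorem proposition2p5:
  fixes V :: "('n::finite \<Rightarrow> real) set"
  assumes "countable V"
  shows "ennreal_ln (\<integral>\<^sup>+ x. ereal_exp (SUP \<xi>\<in>V. ereal (inner_fun \<xi> x) - Lambda_eta_n \<xi>) \<partial>eta_n)
           \<le> ereal_integral eta_n (\<lambda>x. SUP \<xi>\<in>V. inner_Lambda \<xi> x)"
proof -
  define V' where "V' = {\<xi> \<in> V. \<forall>i. \<xi> i < 1}"
  have "ennreal_ln (\<integral>\<^sup>+x. ereal_exp (SUP \<xi>\<in>V'. ereal (\<Sum>i\<in>UNIV. \<xi> i * x i - Lambda_eta_real (\<xi> i))) \<partial>eta_n)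
      \<le> ereal_integral eta_n (\<lambda>x. SUP \<xi>\<in>V. inner_Lambda \<xi> x)"
  proof (rule ennreal_ln_nn_integral_ereal_exp_SUP_le
      [where g="\<lambda>W. \<integral>x. (MAX \<xi>\<in>W. \<Sum>i\<in>UNIV. Lambda_eta_real (\<xi> i) * (x i - 1)) \<partial>eta_n"])
    show "countable V'" using assms by (rule countable_subset[rotated]) (auto simp: V'_def)
    fix W assume W: "finite W" "W \<noteq> {}" "W \<subseteq> V'"
    show "(\<integral>\<^sup>+x. ennreal (exp (MAX \<xi>\<in>W. \<Sum>i\<in>UNIV. \<xi> i * x i - Lambda_eta_real (\<xi> i))) \<partial>eta_n)
        \<le> ennreal (exp (\<integral>x. (MAX \<xi>\<in>W. \<Sum>i\<in>UNIV. Lambda_eta_real (\<xi> i) * (x i - 1)) \<partial>eta_n))"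
      using nn_integral_exp_Max_sum_le[OF finite_class.finite_UNIV W(1,2), of "\<lambda>\<xi> i. \<xi> i" "\<lambda>_. 0"] W(3)
      by (auto simp: V'_def eta_n_def)
    show "ereal (\<integral>x. (MAX \<xi>\<in>W. \<Sum>i\<in>UNIV. Lambda_eta_real (\<xi> i) * (x i - 1)) \<partial>eta_n)
        \<le> ereal_integral eta_n (\<lambda>x. SUP \<xi>\<in>V. inner_Lambda \<xi> x)"
      using integrable_Max_sum_Lambda[OF W(1,2), of UNIV "\<lambda>\<xi> i. \<xi> i" "\<lambda>_. 0"] W
      by (intro integral_Max_le_ereal_integral_SUP[where V=V]) (auto simp: V'_def eta_n_def inner_Lambda_eq)
  qed measurable
  then show ?thesis by (simp add: SUP_inner_fun_minus_Lambda_eta_n V'_def)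
qed

end
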